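(* Let $(\mathfrak L^-,\mathfrak L^+)$ be a $\lambda$-graph bisystem satisfying $\sigma_{\mathfrak L^-}$-condition (I). Then (a) $(X^+_{\mathfrak L^-},\sigma_{\mathfrak L^-})$ is essentially free, and (b) the triple $(\mathcal A_{\mathfrak L^-},\rho^+,\Sigma^+)$ satisfies condition (I): there is a unital increasing sequence $\mathcal A_1\subset\mathcal A_2\subset\cdots$ of $C^*$-subalgebras of $\mathcal A_{\mathfrak L^-}$ with dense union and $\rho^+_\alpha(\mathcal A_l)\subset\mathcal A_{l+1}$ for all $l$ and $\alpha\in\Sigma^+$, such that for all $k\le l$ in $\mathbb N$ there is a projection $q_k^l\in\mathcal D^+_{\mathfrak L^-}$ commuting with every element of $\mathcal A_l$ with $q_k^la\ne0$ for every nonzero $a\in\mathcal A_l$ and $q_k^l\phi^m(q_k^l)=0$ for $m=1,\dots,k$.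
   Context: $\lambda$-graph bisystem over finite alphabets $\Sigma^\pm$: vertices $V=\bigsqcup_{l\ge0}V_l$, $V_l=\{v_1^l,\dots,v_{m(l)}^l\}$; edges $E^-_{l+1,l}$ from $V_{l+1}$ to $V_l$ labeled by $\lambda^-$ in $\Sigma^-$ (right-resolving) and $E^+_{l,l+1}$ from $V_l$ to $V_{l+1}$ labeled by $\lambda^+$ in $\Sigma^+$ (left-resolving); each vertex at level $l\ge1$ is terminal and source of edges of both diagrams to/from neighbouring levels, each vertex of $V_0$ is terminal of an $E^-_{1,0}$-edge and source of an $E^+_{0,1}$-edge; local property: for $u\in V_l,v\in V_{l+2}$ a label-preserving bijection between $\{(e^-,e^+)\in E^-_{l+1,l}\times E^+_{l+1,l+2}:t(e^-)=u,s(e^-)=s(e^+),t(e^+)=v\}$ and $\{(f^+,f^-)\in E^+_{l,l+1}\times E^-_{l+2,l+1}:s(f^+)=u,t(f^+)=t(f^-),s(f^-)=v\}$. $F(u)$ ($u\in V_l$): label words $(\lambda^-(f_l),\dots,\lambda^-(f_1))$ of $E^-$-paths $f_l,\dots,f_1$ from $u$ down to $V_0$. $A^+_{l,l+1}(i,\alpha,j)=1$ iff some $e\in E^+_{l,l+1}$ goes from $v_i^l$ to $v_j^{l+1}$ with label $\alpha$, else $0$. $\Omega_{\mathfrak L^-}$: sequences $\omega=(u_l,\beta_{-l})_{l\ge1}$ with $E^-$-edges $e_l$ from $u_l$ to $u_{l-1}$ labeled $\beta_{-l}$ ($u_0(\omega)$ the terminal of $e_1$); $U_\Omega(v_i^l;\xi)=\{\omega:u_l=v_i^l,(\beta_{-l},\dots,\beta_{-1})=\xi\}$.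 $E^+_{\mathfrak L^-}$: triples $(\omega,\alpha,\omega')$, $\omega=(u_l,\beta_{-l})$, $\omega'=(u'_l,\beta_{-l+1})_{l\ge1}$, with an $E^+_{l,l+1}$-edge from $u_l$ to $u'_{l+1}$ labeled $\alpha$ for every $l\ge0$. $X^+_{\mathfrak L^-}$: sequences $x=(\alpha_i,\omega^i)_{i\ge1}$ with $(\omega^i,\alpha_{i+1},\omega^{i+1})\in E^+_{\mathfrak L^-}$ ($i\ge1$) and a unique $\omega^0=:\omega^0(x)$ with $(\omega^0,\alpha_1,\omega^1)\in E^+_{\mathfrak L^-}$; product topology; $\sigma_{\mathfrak L^-}$ the left shift; $\lambda_i(x)=\alpha_i$. Essentially free: $\{x:\sigma^m_{\mathfrak L^-}x=\sigma^n_{\mathfrak L^-}x\}$ has empty interior whenever $m\ne n$. $U_X(v_i^l;\xi)=\{x:\omega^0(x)\in U_\Omega(v_i^l;\xi)\}$. $\sigma_{\mathfrak L^-}$-condition (I): for all $k\le l$ in $\mathbb N$ there exist points $x_i^l(\xi)\in U_X(v_i^l;\xi)$, for every $i$ and $\xi\in F(v_i^l)$, such that $\sigma^n_{\mathfrak L^-}(x_i^l(\xi))\ne x_j^l(\eta)$ for all $i,j$, all $\xi\in F(v_i^l),\eta\in F(v_j^l)$ and all $n=1,\dots,k$. Algebras: $\mathcal G^+_{\mathfrak L^-}=\{(x,k-l,y):\sigma^kx=\sigma^ly\}$ is the Deaconu–Renault groupoid of $\sigma_{\mathfrak L^-}$, $\mathcal O^+_{\mathfrak L^-}=C^*(\mathcal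 G^+_{\mathfrak L^-})$, $\mathcal D^+_{\mathfrak L^-}=C(X^+_{\mathfrak L^-})\subset\mathcal O^+_{\mathfrak L^-}$ (functions on the unit space). $S_\alpha$ ($\alpha\in\Sigma^+$) is the characteristic function of $\{(x,1,\sigma_{\mathfrak L^-}x):\lambda_1(x)=\alpha\}$; $S_\mu=S_{\mu_1}\cdots S_{\mu_m}$; $E_i^{l-}(\xi)$ is the characteristic function of $\{(x,0,x):x\in U_X(v_i^l;\xi)\}$; $\mathcal A_{\mathfrak L^-}$ is the $C^*$-subalgebra generated by all $E_i^{l-}(\xi)$; $\rho^+_\alpha\in\mathrm{End}(\mathcal A_{\mathfrak L^-})$ is given by $\rho^+_\alpha(E_i^{l-}(\xi))=\sum_{\beta\in\Sigma^-}\sum_jA^+_{l,l+1}(i,\alpha,j)E_j^{l+1-}(\xi\beta)$ (equivalently $\rho^+_\alpha(a)=S_\alpha^*aS_\alpha$), with $E_j^{l+1-}(\xi\beta)=0$ if $\xi\beta\notin F(v_j^{l+1})$; $\phi^m(X)=\sum_{\mu}S_\mu XS_\mu^*$, sum over all words $\mu$ of length $m$ in the subshift presented by $\mathfrak L^+$ (label words of $E^+$-paths). *)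

theory Defs
  imports "HOL-Analysis.Analysis"
begin

(* Encoding conventions:
   V_l = {0..<m l}  (index i stands for v_{i+?}; we use 0-based indices i < m l).
   Em l i b j  : there is an edge of E^-_{l+1,l} from v_i^{l+1} to v_j^l labeled b.
   Ep l i a j  : there is an edge of E^+_{l,l+1} from v_i^l to v_j^{l+1} labeled a.
   Because E^- is right-resolving and E^+ is left-resolving, there is at most one
   edge with given source, terminal and label, so edges are faithfully encoded by
   these relations. *)

definition lambda_bisystem ::
  "(nat \<Rightarrow> nat) \<Rightarrow> (nat \<Rightarrow> nat \<Rightarrow> 'a \<Rightarrow> nat \<Rightarrow> bool) \<Rightarrow> (nat \<Rightarrow> nat \<Rightarrow> 'b \<Rightarrow> nat \<Rightarrow> bool) \<Rightarrow> bool" where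
  "lambda_bisystem m Em Ep \<longleftrightarrow>
     (\<forall>l i b j. Em l i b j \<longrightarrow> i < m (Suc l) \<and> j < m l) \<and>
     (\<forall>l i a j. Ep l i a j \<longrightarrow> i < m l \<and> j < m (Suc l)) \<and>
     (\<forall>l i b j j'. Em l i b j \<and> Em l i b j' \<longrightarrow> j = j') \<and>
     (\<forall>l i i' a j. Ep l i a j \<and> Ep l i' a j \<longrightarrow> i = i') \<and>
     (\<forall>l v. v < m l \<longrightarrow> (\<exists>w b. Em l w b v) \<and> (\<exists>w a. Ep l v a w)) \<and>
     (\<forall>l v. v < m (Suc l) \<longrightarrow> (\<exists>w b. Em l v b w) \<and> (\<exists>w a. Ep l w a v)) \<and>
     (\<forall>l u v a b. u < m l \<longrightarrow> v < m (Suc (Suc l)) \<longrightarrow>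
        card {w. Em l w b u \<and> Ep (Suc l) w a v} = card {w. Ep l u a w \<and> Em (Suc l) v b w})"

(* omega = (u, beta): u l = u_l (l \<ge> 0, u 0 = u_0(omega)), beta n = beta_{-(n+1)} *)
type_synonym 'a omg = "(nat \<Rightarrow> nat) \<times> (nat \<Rightarrow> 'a)"
(* x n = (alpha_{n+1}, omega^{n+1}) *)
type_synonym ('a, 'b) pt = "nat \<Rightarrow> 'b \<times> 'a omg"

definition Omega :: "(nat \<Rightarrow> nat) \<Rightarrow> (nat \<Rightarrow> nat \<Rightarrow> 'a \<Rightarrow> nat \<Rightarrow> bool) \<Rightarrow> 'a omg set" where
  "Omega m Em = {(u, b). \<forall>l. u l < m l \<and> Em l (u (Suc l)) (b l) (u l)}"

definition EplusL :: "(nat \<Rightarrow> nat \<Rightarrow> 'b \<Rightarrow> nat \<Rightarrow> bool) \<Rightarrow> 'a omg \<Rightarrow> 'b \<Rightarrow> 'a omg \<Rightarrow> bool" where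
  "EplusL Ep w a w' \<longleftrightarrow>
     (\<forall>l. Ep l (fst w l) a (fst w' (Suc l))) \<and> (\<forall>n. snd w' (Suc n) = snd w n)"

definition Xplus :: "(nat \<Rightarrow> nat) \<Rightarrow> (nat \<Rightarrow> nat \<Rightarrow> 'a \<Rightarrow> nat \<Rightarrow> bool) \<Rightarrow> (nat \<Rightarrow> nat \<Rightarrow> 'b \<Rightarrow> nat \<Rightarrow> bool) \<Rightarrow> ('a, 'b) pt set" where
  "Xplus m Em Ep = {x. (\<forall>n. snd (x n) \<in> Omega m Em) \<and>
      (\<forall>n. EplusL Ep (snd (x n)) (fst (x (Suc n))) (snd (x (Suc n)))) \<and>
      (\<exists>!w. w \<in> Omega m Em \<and> EplusL Ep w (fst (x 0)) (snd (x 0)))}"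

definition omega0 :: "(nat \<Rightarrow> nat) \<Rightarrow> (nat \<Rightarrow> nat \<Rightarrow> 'a \<Rightarrow> nat \<Rightarrow> bool) \<Rightarrow> (nat \<Rightarrow> nat \<Rightarrow> 'b \<Rightarrow> nat \<Rightarrow> bool) \<Rightarrow> ('a, 'b) pt \<Rightarrow> 'a omg" where
  "omega0 m Em Ep x = (THE w. w \<in> Omega m Em \<and> EplusL Ep w (fst (x 0)) (snd (x 0)))"

definition shift :: "('a, 'b) pt \<Rightarrow> ('a, 'b) pt" where
  "shift x = (\<lambda>n. x (Suc n))"

definition Xtop :: "(nat \<Rightarrow> nat) \<Rightarrow> (nat \<Rightarrow> nat \<Rightarrow> 'a \<Rightarrow> nat \<Rightarrow> bool) \<Rightarrow> (nat \<Rightarrow> nat \<Rightarrow> 'b \<Rightarrow> nat \<Rightarrow> bool) \<Rightarrow> ('a, 'b) pt topology" where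
  "Xtop m Em Ep = subtopology
     (product_topology (\<lambda>_. prod_topology (discrete_topology UNIV)
        (prod_topology (product_topology (\<lambda>_. discrete_topology UNIV) UNIV)
                       (product_topology (\<lambda>_. discrete_topology UNIV) UNIV))) UNIV)
     (Xplus m Em Ep)"

definition essentially_free :: "(nat \<Rightarrow> nat) \<Rightarrow> (nat \<Rightarrow> nat \<Rightarrow> 'a \<Rightarrow> nat \<Rightarrow> bool) \<Rightarrow> (nat \<Rightarrow> nat \<Rightarrow> 'b \<Rightarrow> nat \<Rightarrow> bool) \<Rightarrow> bool" where
  "essentially_free m Em Ep \<longleftrightarrow>
     (\<forall>p q. p \<noteq> q \<longrightarrow>
        Xtop m Em Ep interior_of {x \<in> Xplus m Em Ep. (shift ^^ p) x = (shift ^^ q) x} = {})"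

definition Fw :: "(nat \<Rightarrow> nat) \<Rightarrow> (nat \<Rightarrow> nat \<Rightarrow> 'a \<Rightarrow> nat \<Rightarrow> bool) \<Rightarrow> nat \<Rightarrow> nat \<Rightarrow> 'a list set" where
  "Fw m Em l i = {xi. length xi = l \<and> (\<exists>w. w l = i \<and>
      (\<forall>k<l. w k < m k \<and> Em k (w (Suc k)) (xi ! (l - Suc k)) (w k)))}"

definition U_Omega :: "(nat \<Rightarrow> nat) \<Rightarrow> (nat \<Rightarrow> nat \<Rightarrow> 'a \<Rightarrow> nat \<Rightarrow> bool) \<Rightarrow> nat \<Rightarrow> nat \<Rightarrow> 'a list \<Rightarrow> 'a omg set" where
  "U_Omega m Em l i xi = {w \<in> Omega m Em. fst w l = i \<and> xi = rev (map (snd w) [0..<l])}"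

definition U_X :: "(nat \<Rightarrow> nat) \<Rightarrow> (nat \<Rightarrow> nat \<Rightarrow> 'a \<Rightarrow> nat \<Rightarrow> bool) \<Rightarrow> (nat \<Rightarrow> nat \<Rightarrow> 'b \<Rightarrow> nat \<Rightarrow> bool) \<Rightarrow> nat \<Rightarrow> nat \<Rightarrow> 'a list \<Rightarrow> ('a, 'b) pt set" where
  "U_X m Em Ep l i xi = {x \<in> Xplus m Em Ep. omega0 m Em Ep x \<in> U_Omega m Em l i xi}"

definition sigma_condI :: "(nat \<Rightarrow> nat) \<Rightarrow> (nat \<Rightarrow> nat \<Rightarrow> 'a \<Rightarrow> nat \<Rightarrow> bool) \<Rightarrow> (nat \<Rightarrow> nat \<Rightarrow> 'b \<Rightarrow> nat \<Rightarrow> bool) \<Rightarrow> bool" where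
  "sigma_condI m Em Ep \<longleftrightarrow>
     (\<forall>k l. 1 \<le> k \<and> k \<le> l \<longrightarrow>
        (\<exists>pts. (\<forall>i<m l. \<forall>xi\<in>Fw m Em l i. pts i xi \<in> U_X m Em Ep l i xi) \<and>
               (\<forall>i<m l. \<forall>j<m l. \<forall>xi\<in>Fw m Em l i. \<forall>eta\<in>Fw m Em l j. \<forall>n\<in>{1..k}.
                   (shift ^^ n) (pts i xi) \<noteq> pts j eta)))"

definition CX :: "(nat \<Rightarrow> nat) \<Rightarrow> (nat \<Rightarrow> nat \<Rightarrow> 'a \<Rightarrow> nat \<Rightarrow> bool) \<Rightarrow> (nat \<Rightarrow> nat \<Rightarrow> 'b \<Rightarrow> nat \<Rightarrow> bool) \<Rightarrow> (('a, 'b) pt \<Rightarrow> complex) set" where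
  "CX m Em Ep = {f. continuous_map (Xtop m Em Ep) euclidean f \<and> (\<forall>x. x \<notin> Xplus m Em Ep \<longrightarrow> f x = 0)}"

definition cstar_sub :: "(nat \<Rightarrow> nat) \<Rightarrow> (nat \<Rightarrow> nat \<Rightarrow> 'a \<Rightarrow> nat \<Rightarrow> bool) \<Rightarrow> (nat \<Rightarrow> nat \<Rightarrow> 'b \<Rightarrow> nat \<Rightarrow> bool) \<Rightarrow> (('a, 'b) pt \<Rightarrow> complex) set \<Rightarrow> bool" where
  "cstar_sub m Em Ep B \<longleftrightarrow> B \<subseteq> CX m Em Ep \<and> (\<lambda>_. 0) \<in> B \<and>
     (\<forall>f\<in>B. \<forall>g\<in>B. (\<lambda>x. f x + g x) \<in> B \<and> (\<lambda>x. f x * g x) \<in> B) \<and>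
     (\<forall>c. \<forall>f\<in>B. (\<lambda>x. c * f x) \<in> B) \<and>
     (\<forall>f\<in>B. (\<lambda>x. cnj (f x)) \<in> B) \<and>
     (\<forall>f\<in>CX m Em Ep. (\<forall>e>0. \<exists>g\<in>B. \<forall>x\<in>Xplus m Em Ep. cmod (f x - g x) < e) \<longrightarrow> f \<in> B)"

definition Eproj :: "(nat \<Rightarrow> nat) \<Rightarrow> (nat \<Rightarrow> nat \<Rightarrow> 'a \<Rightarrow> nat \<Rightarrow> bool) \<Rightarrow> (nat \<Rightarrow> nat \<Rightarrow> 'b \<Rightarrow> nat \<Rightarrow> bool) \<Rightarrow> nat \<Rightarrow> nat \<Rightarrow> 'a list \<Rightarrow> ('a, 'b) pt \<Rightarrow> complex" where
  "Eproj m Em Ep l i xi = (\<lambda>x. if x \<in> U_X m Em Ep l i xi then 1 else 0)"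

definition A_L :: "(nat \<Rightarrow> nat) \<Rightarrow> (nat \<Rightarrow> nat \<Rightarrow> 'a \<Rightarrow> nat \<Rightarrow> bool) \<Rightarrow> (nat \<Rightarrow> nat \<Rightarrow> 'b \<Rightarrow> nat \<Rightarrow> bool) \<Rightarrow> (('a, 'b) pt \<Rightarrow> complex) set" where
  "A_L m Em Ep = \<Inter>{B. cstar_sub m Em Ep B \<and>
      {Eproj m Em Ep l i xi | l i xi. i < m l \<and> xi \<in> Fw m Em l i} \<subseteq> B}"

definition unitX :: "(nat \<Rightarrow> nat) \<Rightarrow> (nat \<Rightarrow> nat \<Rightarrow> 'a \<Rightarrow> nat \<Rightarrow> bool) \<Rightarrow> (nat \<Rightarrow> nat \<Rightarrow> 'b \<Rightarrow> nat \<Rightarrow> bool) \<Rightarrow> ('a, 'b) pt \<Rightarrow> complex" where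
  "unitX m Em Ep = (\<lambda>x. if x \<in> Xplus m Em Ep then 1 else 0)"

(* rho^+_alpha(a) = S_alpha^* a S_alpha, computed in the groupoid algebra *)
definition rho :: "(nat \<Rightarrow> nat) \<Rightarrow> (nat \<Rightarrow> nat \<Rightarrow> 'a \<Rightarrow> nat \<Rightarrow> bool) \<Rightarrow> (nat \<Rightarrow> nat \<Rightarrow> 'b \<Rightarrow> nat \<Rightarrow> bool) \<Rightarrow> 'b \<Rightarrow> (('a, 'b) pt \<Rightarrow> complex) \<Rightarrow> ('a, 'b) pt \<Rightarrow> complex" where
  "rho m Em Ep a f = (\<lambda>y. if y \<in> Xplus m Em Ep
      then (\<Sum>x\<in>{x \<in> Xplus m Em Ep. shift x = y \<and> fst (x 0) = a}. f x) else 0)"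

definition Lplus_words :: "(nat \<Rightarrow> nat \<Rightarrow> 'b \<Rightarrow> nat \<Rightarrow> bool) \<Rightarrow> nat \<Rightarrow> 'b list set" where
  "Lplus_words Ep n = {mu. length mu = n \<and>
      (\<exists>l w. \<forall>k<n. Ep (l + k) (w k) (mu ! k) (w (Suc k)))}"

(* phi^n(q) = sum_mu S_mu q S_mu^*, computed in the groupoid algebra *)
definition phi :: "(nat \<Rightarrow> nat) \<Rightarrow> (nat \<Rightarrow> nat \<Rightarrow> 'a \<Rightarrow> nat \<Rightarrow> bool) \<Rightarrow> (nat \<Rightarrow> nat \<Rightarrow> 'b \<Rightarrow> nat \<Rightarrow> bool) \<Rightarrow> nat \<Rightarrow> (('a, 'b) pt \<Rightarrow> complex) \<Rightarrow> ('a, 'b) pt \<Rightarrow> complex" where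
  "phi m Em Ep n q = (\<lambda>x. if x \<in> Xplus m Em Ep
      then (\<Sum>mu\<in>Lplus_words Ep n.
              if map (\<lambda>k. fst (x k)) [0..<n] = mu then q ((shift ^^ n) x) else 0)
      else 0)"

definition projD :: "(nat \<Rightarrow> nat) \<Rightarrow> (nat \<Rightarrow> nat \<Rightarrow> 'a \<Rightarrow> nat \<Rightarrow> bool) \<Rightarrow> (nat \<Rightarrow> nat \<Rightarrow> 'b \<Rightarrow> nat \<Rightarrow> bool) \<Rightarrow> (('a, 'b) pt \<Rightarrow> complex) \<Rightarrow> bool" where
  "projD m Em Ep q \<longleftrightarrow> q \<in> CX m Em Ep \<and> (\<forall>x. q x * q x = q x \<and> cnj (q x) = q x)"

definition triple_condI :: "(nat \<Rightarrow> nat) \<Rightarrow> (nat \<Rightarrow> nat \<Rightarrow> 'a \<Rightarrow> nat \<Rightarrow> bool) \<Rightarrow> (nat \<Rightarrow> nat \<Rightarrow> 'b \<Rightarrow> nat \<Rightarrow> bool) \<Rightarrow> bool" where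
  "triple_condI m Em Ep \<longleftrightarrow>
    (\<exists>A :: nat \<Rightarrow> (('a, 'b) pt \<Rightarrow> complex) set.
       (\<forall>l\<ge>1. cstar_sub m Em Ep (A l) \<and> A l \<subseteq> A_L m Em Ep \<and> unitX m Em Ep \<in> A l \<and> A l \<subseteq> A (Suc l)) \<and>
       (\<forall>f\<in>A_L m Em Ep. \<forall>e>0. \<exists>l\<ge>1. \<exists>g\<in>A l. \<forall>x\<in>Xplus m Em Ep. cmod (f x - g x) < e) \<and>
       (\<forall>l\<ge>1. \<forall>a. \<forall>f\<in>A l. rho m Em Ep a f \<in> A (Suc l)) \<and>
       (\<forall>k l. 1 \<le> k \<and> k \<le> l \<longrightarrow>
          (\<exists>q. projD m Em Ep q \<and>
               (\<forall>f\<in>A l. \<forall>x. q x * f x = f x * q x) \<and>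
               (\<forall>f\<in>A l. f \<noteq> (\<lambda>_. 0) \<longrightarrow> (\<lambda>x. q x * f x) \<noteq> (\<lambda>_. 0)) \<and>
               (\<forall>n\<in>{1..k}. \<forall>x. q x * phi m Em Ep n q x = 0))))"

end

theory Submission
  imports Defs
begin

(* The algebras A_l are the functions on X^+ that depend only on the level-l cell
   (u_l, beta_{-l} ... beta_{-1}) of omega^0(x).  They are finite combinations of the projections
   E_i^{l-}(xi), so their union is dense in A_{L^-}; and as E^+ is left-resolving, the unique
   preimage of y with first letter alpha has its level-l cell determined by the level-(l+1) cell
   of y, so rho^+_alpha maps A_l into A_{l+1}.  The local property lets every E^+_{L^-}-edge
   ending in omega be traced back level by level; hence a point whose cell agrees deeply enough
   with that of sigma^N x has a sigma^N-preimage close to x.  Condition (I) provides points in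
   all level-l cells that sigma^1 ... sigma^k never map onto each other: the indicator of small
   cylinders around them is the projection q, and if sigma^p = sigma^q on a cylinder around x,
   pulling such a point back close to x yields a point fixed by sigma^(q-p). *)

section \<open>Cylinder sets of the point space\<close>

definition coordinate_topology :: "('b \<times> 'a omg) topology" where
  "coordinate_topology = prod_topology (discrete_topology UNIV)
     (prod_topology (product_topology (\<lambda>_. discrete_topology UNIV) UNIV)
                    (product_topology (\<lambda>_. discrete_topology UNIV) UNIV))"

definition point_topology :: "('a, 'b) pt topology" where
  "point_topology = product_topology (\<lambda>_. coordinate_topology) UNIV"

lemma Xtop_eq_subtopology: "Xtop m Em Ep = subtopology point_topology (Xplus m Em Ep)"
  unfolding Xtop_def point_topology_def coordinate_topology_def ..

lemma topspace_point_topology [simp]: "topspace point_topology = UNIV"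
  by (simp add: point_topology_def coordinate_topology_def)

definition coordinate_agree :: "nat \<Rightarrow> 'b \<times> 'a omg \<Rightarrow> 'b \<times> 'a omg \<Rightarrow> bool" where
  "coordinate_agree d v w \<longleftrightarrow> fst w = fst v \<and>
     (\<forall>n<d. fst (snd w) n = fst (snd v) n \<and> snd (snd w) n = snd (snd v) n)"

definition agree :: "nat \<Rightarrow> ('a, 'b) pt \<Rightarrow> ('a, 'b) pt \<Rightarrow> bool" where
  "agree d x z \<longleftrightarrow> (\<forall>i<d. coordinate_agree d (x i) (z i))"

lemma agree_refl: "agree d x x"
  by (simp add: agree_def coordinate_agree_def)

lemma agree_sym: "agree d x z \<Longrightarrow> agree d z x"
  by (simp add: agree_def coordinate_agree_def)

lemma agree_trans: "agree d x y \<Longrightarrow> agree d y z \<Longrightarrow> agree d x z"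
  by (simp add: agree_def coordinate_agree_def)

lemma agree_mono: "agree d x z \<Longrightarrow> d' \<le> d \<Longrightarrow> agree d' x z"
  by (simp add: agree_def coordinate_agree_def)

lemma funpow_shift_apply: "(shift ^^ n) x i = x (i + n)"
  by (induction n arbitrary: i) (auto simp: shift_def)

lemma agree_funpow_shift: "agree d x z \<Longrightarrow> agree (d - n) ((shift ^^ n) x) ((shift ^^ n) z)"
  by (simp add: agree_def coordinate_agree_def funpow_shift_apply)

lemma agree_all_imp_eq: "(\<And>d. agree d x z) \<Longrightarrow> x = z"
proof -
  assume agree: "\<And>d. agree d x z"
  have "x i = z i" for i
  proof -
    have "fst (x i) = fst (z i)"
      using agree[of "Suc i"] by (simp add: agree_def coordinate_agree_def)
    moreover have "fst (snd (x i)) n = fst (snd (z i)) n \<and> snd (snd (x i)) n = snd (snd (z i)) n" for n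
      using agree[of "Suc (i + n)"] by (simp add: agree_def coordinate_agree_def)
    ultimately show ?thesis
      by (simp add: prod_eq_iff fun_eq_iff)
  qed
  then show "x = z" by blast
qed

lemma cylinders_separate:
  assumes "finite P" and apart: "\<And>p p' n. p \<in> P \<Longrightarrow> p' \<in> P \<Longrightarrow> n \<in> {1..k} \<Longrightarrow> (shift ^^ n) p \<noteq> p'"
  obtains D where "\<And>p p' n x. p \<in> P \<Longrightarrow> p' \<in> P \<Longrightarrow> n \<in> {1..k} \<Longrightarrow>
    agree D p x \<Longrightarrow> \<not> agree D p' ((shift ^^ n) x)"
proof -
  define T where "T = P \<times> P \<times> {1..k}"
  have "\<forall>t\<in>T. \<exists>d. \<not> agree d ((shift ^^ snd (snd t)) (fst t)) (fst (snd t))"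
    using apart agree_all_imp_eq by (fastforce simp: T_def)
  then obtain dd where dd: "\<forall>t\<in>T. \<not> agree (dd t) ((shift ^^ snd (snd t)) (fst t)) (fst (snd t))"
    by (auto dest!: bchoice)
  have "finite T" using \<open>finite P\<close> by (simp add: T_def)
  \<comment> \<open>a shift by at most \<open>k\<close> loses at most \<open>k\<close> of the \<open>D\<close> agreeing coordinates\<close>
  define D where "D = k + Max (insert 0 (dd ` T))"
  have "\<not> agree D p' ((shift ^^ n) x)"
    if p: "p \<in> P" "p' \<in> P" "n \<in> {1..k}" and "agree D p x" for p p' n x
  proof
    assume "agree D p' ((shift ^^ n) x)"
    moreover have "agree (D - n) ((shift ^^ n) p) ((shift ^^ n) x)"
      using agree_funpow_shift \<open>agree D p x\<close> by blast
    ultimately have "agree (D - n) ((shift ^^ n) p) p'"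
      by (meson agree_mono agree_sym agree_trans diff_le_self)
    moreover have "(p, p', n) \<in> T" using p by (simp add: T_def)
    moreover have "dd (p, p', n) \<le> D - n"
    proof -
      have "dd (p, p', n) \<le> Max (insert 0 (dd ` T))"
        using \<open>finite T\<close> \<open>(p, p', n) \<in> T\<close> by (intro Max_ge) auto
      then show ?thesis using p(3) unfolding D_def atLeastAtMost_iff by linarith
    qed
    ultimately show False
      using dd agree_mono by fastforce
  qed
  then show thesis using that by blast
qed

lemma continuous_map_coordinate:
  "continuous_map point_topology (prod_topology (discrete_topology UNIV)
     (prod_topology (product_topology (\<lambda>_. discrete_topology UNIV) UNIV)
                    (product_topology (\<lambda>_. discrete_topology UNIV) UNIV))) (\<lambda>z. z i)"
  unfolding point_topology_def coordinate_topology_def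
  by (rule continuous_map_product_projection) simp

lemma openin_point_topology_level_set:
  assumes "continuous_map point_topology (discrete_topology UNIV) g"
  shows "openin point_topology {z. g z = c}"
  using openin_continuous_map_preimage[OF assms, of "{c}"] by simp

lemma openin_point_topology_INT:
  assumes "finite I" "\<And>i. i \<in> I \<Longrightarrow> openin point_topology (U i)"
  shows "openin point_topology (\<Inter>i\<in>I. U i)"
  using assms openin_INT2[of I point_topology U] openin_topspace[of point_topology]
  by (cases "I = {}") auto

lemma openin_agree: "openin point_topology {z. agree d x z}"
proof -
  have letter: "continuous_map point_topology (discrete_topology UNIV) (\<lambda>z. fst (z i))" for i
    using continuous_map_fst_of[OF continuous_map_coordinate]
    by (simp add: o_def)
  have vertex: "continuous_map point_topology (discrete_topology UNIV) (\<lambda>z. fst (snd (z i)) n)" for i n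
    using continuous_map_fst_of[OF continuous_map_snd_of[OF continuous_map_coordinate]]
    by (auto simp: o_def continuous_map_componentwise_UNIV)
  have label: "continuous_map point_topology (discrete_topology UNIV) (\<lambda>z. snd (snd (z i)) n)" for i n
    using continuous_map_snd_of[OF continuous_map_snd_of[OF continuous_map_coordinate]]
    by (auto simp: o_def continuous_map_componentwise_UNIV)
  have "{z. agree d x z} = (\<Inter>i<d. {z. fst (z i) = fst (x i)}) \<inter>
      (\<Inter>(i, n)\<in>{..<d} \<times> {..<d}. {z. fst (snd (z i)) n = fst (snd (x i)) n} \<inter>
                                  {z. snd (snd (z i)) n = snd (snd (x i)) n})"
    by (auto simp: agree_def coordinate_agree_def)
  then show ?thesis
    by (auto intro!: openin_Int openin_point_topology_INT openin_point_topology_level_set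
        letter vertex label)
qed

lemma discrete_functions_open_prefix:
  assumes "openin (product_topology (\<lambda>_. discrete_topology UNIV) (UNIV :: nat set)) V" "f \<in> V"
  obtains d where "\<And>g. (\<forall>n<d. g n = f n) \<Longrightarrow> g \<in> V"
proof -
  obtain U where U: "finite {i. U i \<noteq> UNIV}" "f \<in> PiE UNIV U" "PiE UNIV U \<subseteq> V"
    using assms unfolding openin_product_topology_alt by auto
  obtain d where d: "{i. U i \<noteq> UNIV} \<subseteq> {..<d}"
    using finite_nat_bounded[OF U(1)] by blast
  have "g \<in> V" if "\<forall>n<d. g n = f n" for g
  proof -
    have "g i \<in> U i" for i
      using that d U(2) by (cases "i < d") (auto simp: PiE_UNIV_domain)
    then show ?thesis using U(3) by (auto simp: PiE_UNIV_domain)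
  qed
  then show thesis using that by blast
qed

lemma coordinate_open_prefix:
  assumes "openin coordinate_topology V" "v \<in> V"
  obtains d where "\<And>w. coordinate_agree d v w \<Longrightarrow> w \<in> V"
proof -
  obtain U W where UW: "fst v \<in> U" "openin (prod_topology (product_topology (\<lambda>_. discrete_topology UNIV) UNIV)
                       (product_topology (\<lambda>_. discrete_topology UNIV) UNIV)) W"
    "snd v \<in> W" "U \<times> W \<subseteq> V"
    using assms unfolding coordinate_topology_def openin_prod_topology_alt by (metis prod.collapse)
  obtain W1 W2 where W: "openin (product_topology (\<lambda>_. discrete_topology UNIV) UNIV) W1"
    "openin (product_topology (\<lambda>_. discrete_topology UNIV) UNIV) W2"
    "fst (snd v) \<in> W1" "snd (snd v) \<in> W2" "W1 \<times> W2 \<subseteq> W"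
    using UW(2,3) unfolding openin_prod_topology_alt by (metis prod.collapse)
  obtain d1 where d1: "\<And>g. \<forall>n<d1. g n = fst (snd v) n \<Longrightarrow> g \<in> W1"
    using discrete_functions_open_prefix[OF W(1,3)] by blast
  obtain d2 where d2: "\<And>g. \<forall>n<d2. g n = snd (snd v) n \<Longrightarrow> g \<in> W2"
    using discrete_functions_open_prefix[OF W(2,4)] by blast
  have "w \<in> V" if "coordinate_agree (d1 + d2) v w" for w
  proof -
    have "fst (snd w) \<in> W1" "snd (snd w) \<in> W2"
      using that by (auto simp: coordinate_agree_def intro!: d1 d2)
    then have "snd w \<in> W" using W(5) by (auto simp: mem_Times_iff)
    then show ?thesis using UW(1,4) that by (auto simp: mem_Times_iff coordinate_agree_def)
  qed
  then show thesis using that by blast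
qed

lemma open_contains_cylinder:
  assumes "openin point_topology S" "x \<in> S"
  obtains d where "\<And>z. agree d x z \<Longrightarrow> z \<in> S"
proof -
  obtain U where U: "finite {i. U i \<noteq> topspace coordinate_topology}"
    "\<And>i. openin coordinate_topology (U i)" "x \<in> PiE UNIV U" "PiE UNIV U \<subseteq> S"
    using assms unfolding point_topology_def openin_product_topology_alt by auto
  obtain d0 where d0: "{i. U i \<noteq> topspace coordinate_topology} \<subseteq> {..<d0}"
    using finite_nat_bounded[OF U(1)] by blast
  have "\<forall>i. \<exists>d. \<forall>w. coordinate_agree d (x i) w \<longrightarrow> w \<in> U i"
  proof
    fix i
    have "x i \<in> U i" using U(3) by (auto simp: PiE_UNIV_domain)
    then show "\<exists>d. \<forall>w. coordinate_agree d (x i) w \<longrightarrow> w \<in> U i"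
      using coordinate_open_prefix[OF U(2)] by metis
  qed
  then obtain dd where dd: "\<And>i w. coordinate_agree (dd i) (x i) w \<Longrightarrow> w \<in> U i"
    by metis
  define d where "d = d0 + (\<Sum>i<d0. dd i)"
  have "z \<in> S" if "agree d x z" for z
  proof -
    have "z i \<in> U i" for i
    proof (cases "i < d0")
      case True
      have "dd i \<le> (\<Sum>i<d0. dd i)"
        using True by (intro member_le_sum) auto
      then have "i < d" "dd i \<le> d" using True by (simp_all add: d_def)
      then show ?thesis
        using that by (intro dd) (auto simp: agree_def coordinate_agree_def)
    next
      case False
      then show ?thesis using d0 by (auto simp: coordinate_topology_def)
    qed
    then show ?thesis using U(4) by (auto simp: PiE_UNIV_domain)
  qed
  then show thesis using that by blast
qed

lemma locally_constant_in_CX: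
  assumes "\<And>x. x \<notin> Xplus m Em Ep \<Longrightarrow> f x = 0"
    and "\<And>x. x \<in> Xplus m Em Ep \<Longrightarrow> \<exists>d. \<forall>z\<in>Xplus m Em Ep. agree d x z \<longrightarrow> f z = f x"
  shows "f \<in> CX m Em Ep"
proof -
  have "openin (Xtop m Em Ep) {x \<in> Xplus m Em Ep. f x \<in> U}" for U
    unfolding Xtop_eq_subtopology
  proof (subst openin_subopen, intro ballI)
    fix x assume x: "x \<in> {x \<in> Xplus m Em Ep. f x \<in> U}"
    obtain d where d: "\<forall>z\<in>Xplus m Em Ep. agree d x z \<longrightarrow> f z = f x"
      using assms(2) x by blast
    have "openin (subtopology point_topology (Xplus m Em Ep)) ({z. agree d x z} \<inter> Xplus m Em Ep)"
      using openin_agree openin_subtopology by blast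
    moreover have "{z. agree d x z} \<inter> Xplus m Em Ep \<subseteq> {x \<in> Xplus m Em Ep. f x \<in> U}"
      using d x by auto
    ultimately show "\<exists>T. openin (subtopology point_topology (Xplus m Em Ep)) T \<and> x \<in> T \<and>
        T \<subseteq> {x \<in> Xplus m Em Ep. f x \<in> U}"
      using x agree_refl by blast
  qed
  then have "continuous_map (Xtop m Em Ep) euclidean f"
    by (simp add: continuous_map_def Xtop_eq_subtopology)
  then show ?thesis using assms(1) by (simp add: CX_def)
qed

section \<open>Uniform approximation by locally constant functions\<close>

lemma CX_add: "f \<in> CX m Em Ep \<Longrightarrow> g \<in> CX m Em Ep \<Longrightarrow> (\<lambda>x. f x + g x) \<in> CX m Em Ep"
  and CX_mult: "f \<in> CX m Em Ep \<Longrightarrow> g \<in> CX m Em Ep \<Longrightarrow> (\<lambda>x. f x * g x) \<in> CX m Em Ep"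
  and CX_scale: "f \<in> CX m Em Ep \<Longrightarrow> (\<lambda>x. c * f x) \<in> CX m Em Ep"
  and CX_cnj: "f \<in> CX m Em Ep \<Longrightarrow> (\<lambda>x. cnj (f x)) \<in> CX m Em Ep"
  unfolding CX_def by (auto simp: continuous_map_atin tendsto_add tendsto_mult tendsto_cnj)

lemma cstar_sub_sum:
  assumes "cstar_sub m Em Ep B" "finite P" "\<And>p. p \<in> P \<Longrightarrow> g p \<in> B"
  shows "(\<lambda>x. \<Sum>p\<in>P. c p * g p x) \<in> B"
  using assms(2,3)
proof (induction P rule: finite_induct)
  case empty
  then show ?case using assms(1) by (simp add: cstar_sub_def)
next
  case (insert p P)
  then have "(\<lambda>x. c p * g p x) \<in> B"
    using assms(1) by (simp add: cstar_sub_def)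
  then show ?case
    using insert assms(1) unfolding cstar_sub_def by simp
qed

definition uniformly_approximable :: "'p set \<Rightarrow> ('p \<Rightarrow> complex) set \<Rightarrow> ('p \<Rightarrow> complex) \<Rightarrow> bool" where
  "uniformly_approximable S F f \<longleftrightarrow> (\<forall>e>0. \<exists>g\<in>F. \<forall>x\<in>S. cmod (f x - g x) < e)"

lemma uniformly_approximable_self: "f \<in> F \<Longrightarrow> uniformly_approximable S F f"
  unfolding uniformly_approximable_def by force

lemma uniformly_approximable_trans:
  assumes "\<And>e. e > 0 \<Longrightarrow> \<exists>g. uniformly_approximable S F g \<and> (\<forall>x\<in>S. cmod (f x - g x) < e)"
  shows "uniformly_approximable S F f"
  unfolding uniformly_approximable_def
proof (intro allI impI)
  fix e :: real assume "e > 0"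
  then obtain g where g: "uniformly_approximable S F g" "\<forall>x\<in>S. cmod (f x - g x) < e / 2"
    using assms[of "e / 2"] by auto
  then obtain h where h: "h \<in> F" "\<forall>x\<in>S. cmod (g x - h x) < e / 2"
    using \<open>e > 0\<close> unfolding uniformly_approximable_def by (meson half_gt_zero)
  have "cmod (f x - h x) < e" if "x \<in> S" for x
    using norm_diff_triangle_less[of "f x" "g x" "e / 2" "h x" "e / 2"] g(2) h(2) that by simp
  then show "\<exists>h\<in>F. \<forall>x\<in>S. cmod (f x - h x) < e" using h(1) by blast
qed

lemma uniformly_approximable_bounded:
  assumes "uniformly_approximable S F f" and "\<And>g. g \<in> F \<Longrightarrow> \<exists>K. \<forall>x\<in>S. cmod (g x) \<le> K"
  shows "\<exists>K\<ge>0. \<forall>x\<in>S. cmod (f x) \<le> K"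
proof -
  obtain g where g: "g \<in> F" "\<forall>x\<in>S. cmod (f x - g x) < 1"
    using assms(1) unfolding uniformly_approximable_def by (meson zero_less_one)
  obtain K where K: "\<forall>x\<in>S. cmod (g x) \<le> K" using assms(2)[OF g(1)] by blast
  have "cmod (f x) \<le> max 0 K + 1" if "x \<in> S" for x
  proof -
    have "cmod (f x) \<le> cmod (g x) + cmod (f x - g x)"
      by (rule norm_triangle_sub)
    then show ?thesis using g(2) K that by fastforce
  qed
  then show ?thesis by (intro exI[of _ "max 0 K + 1"]) auto
qed

lemma uniformly_approximable_add:
  assumes "\<And>g h. g \<in> F \<Longrightarrow> h \<in> F \<Longrightarrow> (\<lambda>x. g x + h x) \<in> F"
    and "uniformly_approximable S F f" "uniformly_approximable S F f'"
  shows "uniformly_approximable S F (\<lambda>x. f x + f' x)"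
  unfolding uniformly_approximable_def
proof (intro allI impI)
  fix e :: real assume "e > 0"
  then obtain g g' where g: "g \<in> F" "\<forall>x\<in>S. cmod (f x - g x) < e / 2"
    and g': "g' \<in> F" "\<forall>x\<in>S. cmod (f' x - g' x) < e / 2"
    using assms(2,3) unfolding uniformly_approximable_def by (meson half_gt_zero)
  have "cmod (f x + f' x - (g x + g' x)) < e" if "x \<in> S" for x
    using norm_diff_triangle_ineq[of "f x" "f' x" "g x" "g' x"] g(2) g'(2) that by fastforce
  then show "\<exists>h\<in>F. \<forall>x\<in>S. cmod (f x + f' x - h x) < e"
    using assms(1)[OF g(1) g'(1)] by fastforce
qed

lemma norm_mult_diff_le:
  fixes a b c d :: complex
  shows "cmod (a * b - c * d) \<le> cmod (a - c) * cmod b + cmod c * cmod (b - d)"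
proof -
  have "a * b - c * d = (a - c) * b + c * (b - d)"
    by (simp add: algebra_simps)
  then show ?thesis
    using norm_triangle_ineq[of "(a - c) * b" "c * (b - d)"] by (simp add: norm_mult)
qed

lemma uniformly_approximable_mult:
  assumes closed: "\<And>g h. g \<in> F \<Longrightarrow> h \<in> F \<Longrightarrow> (\<lambda>x. g x * h x) \<in> F"
    and bounded: "\<And>g. g \<in> F \<Longrightarrow> \<exists>K. \<forall>x\<in>S. cmod (g x) \<le> K"
    and f: "uniformly_approximable S F f" and f': "uniformly_approximable S F f'"
  shows "uniformly_approximable S F (\<lambda>x. f x * f' x)"
  unfolding uniformly_approximable_def
proof (intro allI impI)
  fix e :: real assume "e > 0"
  obtain K where K: "K \<ge> 0" "\<forall>x\<in>S. cmod (f x) \<le> K"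
    using uniformly_approximable_bounded[OF f bounded] by blast
  obtain K' where K': "K' \<ge> 0" "\<forall>x\<in>S. cmod (f' x) \<le> K'"
    using uniformly_approximable_bounded[OF f' bounded] by blast
  define d where "d = e / (K + K' + 2)"
  have d: "d > 0" "d * (K + K' + 1) < e"
    using \<open>e > 0\<close> K(1) K'(1) by (simp_all add: d_def field_simps)
  obtain g g' where g: "g \<in> F" "\<forall>x\<in>S. cmod (f x - g x) < min d 1"
    and g': "g' \<in> F" "\<forall>x\<in>S. cmod (f' x - g' x) < d"
    using f f' d(1) unfolding uniformly_approximable_def by (metis min_less_iff_conj zero_less_one)
  have "cmod (f x * f' x - g x * g' x) < e" if "x \<in> S" for x
  proof -
    have "cmod (g x) \<le> cmod (f x) + cmod (g x - f x)"
      by (rule norm_triangle_sub)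
    moreover have "cmod (g x - f x) < 1"
      using g(2) that by (simp add: norm_minus_commute)
    moreover have "cmod (f x) \<le> K"
      using K(2) that by blast
    ultimately have "cmod (g x) \<le> K + 1" by linarith
    have "cmod (f x * f' x - g x * g' x) \<le> cmod (f x - g x) * cmod (f' x) + cmod (g x) * cmod (f' x - g' x)"
      by (rule norm_mult_diff_le)
    also have "\<dots> \<le> d * K' + (K + 1) * d"
    proof -
      have "cmod (f x - g x) \<le> d" "cmod (f' x - g' x) \<le> d" "cmod (f' x) \<le> K'"
        using g(2) g'(2) K'(2) that by (auto intro: less_imp_le)
      then show ?thesis
        using K(1) d(1) \<open>cmod (g x) \<le> K + 1\<close> by (intro add_mono mult_mono) auto
    qed
    also have "\<dots> < e" using d(2) by (simp add: algebra_simps)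
    finally show ?thesis .
  qed
  then show "\<exists>h\<in>F. \<forall>x\<in>S. cmod (f x * f' x - h x) < e"
    using closed[OF g(1) g'(1)] by fastforce
qed

lemma uniformly_approximable_scale:
  assumes "\<And>g. g \<in> F \<Longrightarrow> (\<lambda>x. c * g x) \<in> F" and "uniformly_approximable S F f"
  shows "uniformly_approximable S F (\<lambda>x. c * f x)"
  unfolding uniformly_approximable_def
proof (intro allI impI)
  fix e :: real assume "e > 0"
  define d where "d = e / (cmod c + 1)"
  have d: "d > 0" "cmod c * d < e"
    using \<open>e > 0\<close> by (simp_all add: d_def field_simps add_pos_nonneg)
  obtain g where g: "g \<in> F" "\<forall>x\<in>S. cmod (f x - g x) < d"
    using assms(2) d(1) unfolding uniformly_approximable_def by blast
  have "cmod (c * f x - c * g x) < e" if "x \<in> S" for x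
  proof -
    have "cmod (c * f x - c * g x) = cmod c * cmod (f x - g x)"
      by (simp add: right_diff_distrib[symmetric] norm_mult)
    also have "\<dots> \<le> cmod c * d"
      using g(2) that by (simp add: less_imp_le mult_left_mono)
    finally show ?thesis using d(2) by linarith
  qed
  then show "\<exists>h\<in>F. \<forall>x\<in>S. cmod (c * f x - h x) < e"
    using assms(1)[OF g(1)] by fastforce
qed

lemma uniformly_approximable_cnj:
  assumes "\<And>g. g \<in> F \<Longrightarrow> (\<lambda>x. cnj (g x)) \<in> F" and "uniformly_approximable S F f"
  shows "uniformly_approximable S F (\<lambda>x. cnj (f x))"
  unfolding uniformly_approximable_def
proof (intro allI impI)
  fix e :: real assume "e > 0"
  then obtain g where g: "g \<in> F" "\<forall>x\<in>S. cmod (f x - g x) < e"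
    using assms(2) unfolding uniformly_approximable_def by blast
  then have "\<forall>x\<in>S. cmod (cnj (f x) - cnj (g x)) < e"
    by (simp add: complex_cnj_diff[symmetric] del: complex_cnj_diff)
  then show "\<exists>h\<in>F. \<forall>x\<in>S. cmod (cnj (f x) - h x) < e"
    using assms(1)[OF g(1)] by fastforce
qed

lemma cstar_sub_uniform_closure:
  assumes add: "\<And>g h. g \<in> F \<Longrightarrow> h \<in> F \<Longrightarrow> (\<lambda>x. g x + h x) \<in> F"
    and mult: "\<And>g h. g \<in> F \<Longrightarrow> h \<in> F \<Longrightarrow> (\<lambda>x. g x * h x) \<in> F"
    and scale: "\<And>g c. g \<in> F \<Longrightarrow> (\<lambda>x. c * g x) \<in> F"
    and cnj: "\<And>g. g \<in> F \<Longrightarrow> (\<lambda>x. cnj (g x)) \<in> F"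
    and bounded: "\<And>g. g \<in> F \<Longrightarrow> \<exists>K. \<forall>x\<in>Xplus m Em Ep. cmod (g x) \<le> K"
    and zero: "(\<lambda>_. 0) \<in> F"
  shows "cstar_sub m Em Ep {f \<in> CX m Em Ep. uniformly_approximable (Xplus m Em Ep) F f}"
  (is "cstar_sub m Em Ep ?B")
  unfolding cstar_sub_def
proof (intro conjI ballI allI impI subsetI)
  show "(\<lambda>_. 0) \<in> ?B"
    using zero uniformly_approximable_self by (simp add: CX_def)
next
  fix f g assume "f \<in> ?B" "g \<in> ?B"
  then show "(\<lambda>x. f x + g x) \<in> ?B" "(\<lambda>x. f x * g x) \<in> ?B"
    using CX_add CX_mult uniformly_approximable_add[OF add] uniformly_approximable_mult[OF mult bounded]
    by blast+
next
  fix f c assume "f \<in> ?B"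
  then show "(\<lambda>x. c * f x) \<in> ?B" "(\<lambda>x. cnj (f x)) \<in> ?B"
    using CX_scale CX_cnj uniformly_approximable_scale[OF scale] uniformly_approximable_cnj[OF cnj]
    by blast+
next
  fix f assume f: "f \<in> CX m Em Ep" and approx: "\<forall>e>0. \<exists>g\<in>?B. \<forall>x\<in>Xplus m Em Ep. cmod (f x - g x) < e"
  have "uniformly_approximable (Xplus m Em Ep) F f"
  proof (rule uniformly_approximable_trans)
    fix e :: real assume "e > 0"
    then obtain g where "g \<in> ?B" "\<forall>x\<in>Xplus m Em Ep. cmod (f x - g x) < e"
      using approx by blast
    then show "\<exists>g. uniformly_approximable (Xplus m Em Ep) F g \<and> (\<forall>x\<in>Xplus m Em Ep. cmod (f x - g x) < e)"
      by blast
  qed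
  then show "f \<in> ?B" using f by blast
qed auto

section \<open>Cells and backward extension\<close>

definition cell_index :: "nat \<Rightarrow> 'a omg \<Rightarrow> nat \<times> 'a list" where
  "cell_index l w = (fst w l, rev (map (snd w) [0..<l]))"

lemma cell_index_eq_iff:
  "cell_index l w = cell_index l w' \<longleftrightarrow> fst w l = fst w' l \<and> (\<forall>n<l. snd w n = snd w' n)"
  by (auto simp: cell_index_def map_eq_conv)

locale lambda_graph_bisystem =
  fixes m :: "nat \<Rightarrow> nat"
    and Em :: "nat \<Rightarrow> nat \<Rightarrow> 'a::finite \<Rightarrow> nat \<Rightarrow> bool"
    and Ep :: "nat \<Rightarrow> nat \<Rightarrow> 'b \<Rightarrow> nat \<Rightarrow> bool"
  assumes bisystem: "lambda_bisystem m Em Ep"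
begin

abbreviation X :: "('a, 'b) pt set" where
  "X \<equiv> Xplus m Em Ep"

abbreviation w0 :: "('a, 'b) pt \<Rightarrow> 'a omg" where
  "w0 \<equiv> omega0 m Em Ep"

lemma Em_right_resolving: "Em l i b j \<Longrightarrow> Em l i b j' \<Longrightarrow> j = j'"
  using bisystem unfolding lambda_bisystem_def by (elim conjE) blast

lemma Ep_left_resolving: "Ep l i a j \<Longrightarrow> Ep l i' a j \<Longrightarrow> i = i'"
  using bisystem unfolding lambda_bisystem_def by (elim conjE) blast

lemma Ep_source_bound: "Ep l i a j \<Longrightarrow> i < m l"
  using bisystem unfolding lambda_bisystem_def by (elim conjE) blast

lemma Ep_target_bound: "Ep l i a j \<Longrightarrow> j < m (Suc l)"
  using bisystem unfolding lambda_bisystem_def by (elim conjE) blast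

lemma local_property:
  assumes "u < m l" "v < m (Suc (Suc l))"
  shows "card {w. Em l w b u \<and> Ep (Suc l) w a v} = card {w. Ep l u a w \<and> Em (Suc l) v b w}"
proof -
  have "\<forall>l u v a b. u < m l \<longrightarrow> v < m (Suc (Suc l)) \<longrightarrow>
      card {w. Em l w b u \<and> Ep (Suc l) w a v} = card {w. Ep l u a w \<and> Em (Suc l) v b w}"
    using bisystem unfolding lambda_bisystem_def by blast
  then show ?thesis using assms by simp
qed

lemma Omega_edge: "w \<in> Omega m Em \<Longrightarrow> Em l (fst w (Suc l)) (snd w l) (fst w l)"
  by (auto simp: Omega_def)

lemma EplusL_unique: "EplusL Ep w a w' \<Longrightarrow> EplusL Ep v a w' \<Longrightarrow> w = v"
  unfolding EplusL_def by (auto simp: prod_eq_iff fun_eq_iff intro: Ep_left_resolving)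

lemma Xplus_iff:
  "x \<in> X \<longleftrightarrow> (\<forall>n. snd (x n) \<in> Omega m Em) \<and>
      (\<forall>n. EplusL Ep (snd (x n)) (fst (x (Suc n))) (snd (x (Suc n)))) \<and>
      (\<exists>w\<in>Omega m Em. EplusL Ep w (fst (x 0)) (snd (x 0)))"
  unfolding Xplus_def using EplusL_unique by blast

lemma omega0_in_Omega: "x \<in> X \<Longrightarrow> w0 x \<in> Omega m Em"
  and EplusL_omega0: "x \<in> X \<Longrightarrow> EplusL Ep (w0 x) (fst (x 0)) (snd (x 0))"
proof -
  assume "x \<in> X"
  then have "\<exists>!w. w \<in> Omega m Em \<and> EplusL Ep w (fst (x 0)) (snd (x 0))"
    unfolding Xplus_def by blast
  then have "w0 x \<in> Omega m Em \<and> EplusL Ep (w0 x) (fst (x 0)) (snd (x 0))"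
    unfolding omega0_def by (rule theI')
  then show "w0 x \<in> Omega m Em" "EplusL Ep (w0 x) (fst (x 0)) (snd (x 0))"
    by auto
qed

lemma omega0_eqI: "x \<in> X \<Longrightarrow> EplusL Ep w (fst (x 0)) (snd (x 0)) \<Longrightarrow> w0 x = w"
  using EplusL_omega0 EplusL_unique by blast

lemma shift_in_Xplus: "x \<in> X \<Longrightarrow> shift x \<in> X"
  unfolding Xplus_iff by (auto simp: shift_def)

lemma omega0_shift: "x \<in> X \<Longrightarrow> w0 (shift x) = snd (x 0)"
  using shift_in_Xplus by (intro omega0_eqI) (auto simp: Xplus_iff shift_def)

lemma funpow_shift_in_Xplus: "x \<in> X \<Longrightarrow> (shift ^^ n) x \<in> X"
  by (induction n) (auto simp: shift_in_Xplus)

lemma omega0_funpow_shift: "x \<in> X \<Longrightarrow> w0 ((shift ^^ Suc i) x) = snd (x i)"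
  using omega0_shift[OF funpow_shift_in_Xplus] by (simp add: funpow_shift_apply)

lemma cell_index_mono:
  assumes "w \<in> Omega m Em" "w' \<in> Omega m Em" "cell_index l w = cell_index l w'" "l' \<le> l"
  shows "cell_index l' w = cell_index l' w'"
proof -
  have "fst w (l - j) = fst w' (l - j)" if "j \<le> l" for j
    using that
  proof (induction j)
    case 0
    then show ?case using assms(3) by (simp add: cell_index_eq_iff)
  next
    case (Suc j)
    define k where "k = l - Suc j"
    have "Suc k = l - j" "k < l" using Suc.prems by (simp_all add: k_def)
    then have "fst w (Suc k) = fst w' (Suc k)" "snd w k = snd w' k"
      using Suc assms(3) by (simp_all add: cell_index_eq_iff)
    then show ?case
      using Omega_edge[OF assms(1), of k] Omega_edge[OF assms(2), of k]
      by (simp add: k_def Em_right_resolving)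
  qed
  from this[of "l - l'"] show ?thesis
    using assms(3,4) by (simp add: cell_index_eq_iff)
qed

lemma cell_index_eq_below:
  assumes "w \<in> Omega m Em" "w' \<in> Omega m Em" "cell_index l w = cell_index l w'" "n < l"
  shows "fst w n = fst w' n \<and> snd w n = snd w' n"
  using cell_index_mono[OF assms(1-3), of n] assms(3,4) by (simp add: cell_index_eq_iff)

lemma cell_index_EplusL:
  assumes "EplusL Ep v a w" "EplusL Ep v' a w'" "cell_index (Suc l) w = cell_index (Suc l) w'"
  shows "cell_index l v = cell_index l v'"
proof -
  have "fst w (Suc l) = fst w' (Suc l)" and labels: "\<forall>n<Suc l. snd w n = snd w' n"
    using assms(3) by (simp_all add: cell_index_eq_iff)
  have "Ep l (fst v l) a (fst w (Suc l))"
    using assms(1) by (simp add: EplusL_def)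
  moreover have "Ep l (fst v' l) a (fst w (Suc l))"
    using assms(2) \<open>fst w (Suc l) = fst w' (Suc l)\<close> by (simp add: EplusL_def)
  ultimately have "fst v l = fst v' l"
    by (rule Ep_left_resolving)
  moreover have "snd v n = snd v' n" if "n < l" for n
    using assms(1,2) labels that unfolding EplusL_def by (metis Suc_mono)
  ultimately show ?thesis
    by (simp add: cell_index_eq_iff)
qed

lemma local_property_step:
  assumes "w \<in> Omega m Em" "Ep L u a (fst w (Suc L))"
  shows "\<exists>v. Em L v (snd w (Suc L)) u \<and> Ep (Suc L) v a (fst w (Suc (Suc L)))"
proof -
  define R where "R = {v. Ep L u a v \<and> Em (Suc L) (fst w (Suc (Suc L))) (snd w (Suc L)) v}"
  have "fst w (Suc L) \<in> R"
    using assms Omega_edge by (simp add: R_def)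
  moreover have "finite R"
    by (rule finite_subset[of _ "{..<m (Suc L)}"]) (auto simp: R_def dest: Ep_target_bound)
  ultimately have "card R > 0"
    by (auto simp: card_gt_0_iff)
  moreover have "fst w (Suc (Suc L)) < m (Suc (Suc L))"
    using assms(1) by (simp add: Omega_def split_beta)
  ultimately have "card {v. Em L v (snd w (Suc L)) u \<and> Ep (Suc L) v a (fst w (Suc (Suc L)))} > 0"
    using local_property[of u L "fst w (Suc (Suc L))"] Ep_source_bound[OF assms(2)]
    by (simp add: R_def)
  then show ?thesis
    by (metis (mono_tags, lifting) card.empty empty_Collect_eq less_irrefl)
qed

lemma EplusL_extend:
  assumes w: "w \<in> Omega m Em" and "Ep 0 u0 a (fst w 1)"
  shows "\<exists>v\<in>Omega m Em. EplusL Ep v a w"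
proof -
  have "\<forall>L u. \<exists>v. Ep L u a (fst w (Suc L)) \<longrightarrow>
      Em L v (snd w (Suc L)) u \<and> Ep (Suc L) v a (fst w (Suc (Suc L)))"
    using local_property_step[OF w] by blast
  then obtain next_vertex where step: "\<And>L u. Ep L u a (fst w (Suc L)) \<Longrightarrow>
      Em L (next_vertex L u) (snd w (Suc L)) u \<and> Ep (Suc L) (next_vertex L u) a (fst w (Suc (Suc L)))"
    by metis
  define u where "u = rec_nat u0 next_vertex"
  have edge: "Ep L (u L) a (fst w (Suc L))" for L
    by (induction L) (use assms step in \<open>auto simp: u_def\<close>)
  define v where "v = (u, \<lambda>n. snd w (Suc n))"
  have "v \<in> Omega m Em"
    using step[OF edge] edge by (auto simp: v_def u_def Omega_def intro: Ep_source_bound)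
  moreover have "EplusL Ep v a w"
    using edge by (simp add: v_def EplusL_def)
  ultimately show ?thesis by blast
qed

definition admissible :: "'b \<Rightarrow> 'a omg \<Rightarrow> bool" where
  "admissible a w \<longleftrightarrow> (\<exists>u. Ep 0 u a (fst w 1))"

definition prepend :: "'b \<Rightarrow> ('a, 'b) pt \<Rightarrow> ('a, 'b) pt" where
  "prepend a y = case_nat (a, w0 y) y"

lemma prepend_0 [simp]: "prepend a y 0 = (a, w0 y)"
  by (simp add: prepend_def)

lemma shift_prepend [simp]: "shift (prepend a y) = y"
  by (simp add: prepend_def shift_def)

lemma prepend_in_Xplus:
  assumes y: "y \<in> X" and "admissible a (w0 y)"
  shows "prepend a y \<in> X"
proof -
  obtain v where "v \<in> Omega m Em" "EplusL Ep v a (w0 y)"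
    using EplusL_extend[OF omega0_in_Omega[OF y]] assms(2) unfolding admissible_def by blast
  then show ?thesis
    using y omega0_in_Omega[OF y] EplusL_omega0[OF y]
    unfolding Xplus_iff by (auto simp: prepend_def split: nat.split)
qed

lemma EplusL_omega0_prepend:
  "y \<in> X \<Longrightarrow> admissible a (w0 y) \<Longrightarrow> EplusL Ep (w0 (prepend a y)) a (w0 y)"
  using EplusL_omega0[OF prepend_in_Xplus] by simp

lemma prepend_shift: "x \<in> X \<Longrightarrow> prepend (fst (x 0)) (shift x) = x"
  using omega0_shift[of x] by (auto simp: fun_eq_iff prepend_def shift_def split: nat.split)

lemma admissible_first_letter: "x \<in> X \<Longrightarrow> admissible (fst (x 0)) (w0 (shift x))"
  using EplusL_omega0 unfolding admissible_def EplusL_def omega0_shift by (metis One_nat_def)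

lemma admissible_cell_index:
  assumes "w \<in> Omega m Em" "w' \<in> Omega m Em" "cell_index l w = cell_index l w'" "1 \<le> l"
  shows "admissible a w \<longleftrightarrow> admissible a w'"
  using cell_index_mono[OF assms] by (simp add: admissible_def cell_index_eq_iff)

lemma prepend_same_cell:
  assumes x: "x \<in> X" and z: "z \<in> X"
    and cell: "cell_index (Suc l) (w0 z) = cell_index (Suc l) (w0 (shift x))"
  shows "prepend (fst (x 0)) z \<in> X \<and> cell_index l (w0 (prepend (fst (x 0)) z)) = cell_index l (w0 x)"
proof -
  have "admissible (fst (x 0)) (w0 z)"
    using admissible_first_letter[OF x] admissible_cell_index[OF _ _ cell]
      omega0_in_Omega z shift_in_Xplus[OF x] by auto
  then show ?thesis
    using prepend_in_Xplus[OF z] cell_index_EplusL[OF EplusL_omega0_prepend[OF z] _ cell]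
      EplusL_omega0[OF x] omega0_shift[OF x] by auto
qed

subsection \<open>The algebras $\mathcal A_l$\<close>

definition cells :: "nat \<Rightarrow> (nat \<times> 'a list) set" where
  "cells l = {(i, xi). i < m l \<and> xi \<in> Fw m Em l i}"

lemma finite_cells: "finite (cells l)"
proof -
  have "cells l \<subseteq> {..<m l} \<times> {xs. set xs \<subseteq> (UNIV :: 'a set) \<and> length xs = l}"
    by (auto simp: cells_def Fw_def)
  moreover have "finite ({..<m l} \<times> {xs. set xs \<subseteq> (UNIV :: 'a set) \<and> length xs = l})"
    using finite_lists_length_eq[of "UNIV :: 'a set" l] by simp
  ultimately show ?thesis by (rule finite_subset)
qed

lemma cell_index_in_cells: "w \<in> Omega m Em \<Longrightarrow> cell_index l w \<in> cells l"
  unfolding cells_def Fw_def cell_index_def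
  by (auto simp: Omega_def rev_nth intro!: exI[of _ "fst w"])

lemma U_X_eq: "U_X m Em Ep l i xi = {x \<in> X. cell_index l (w0 x) = (i, xi)}"
  by (auto simp: U_X_def U_Omega_def cell_index_def omega0_in_Omega)

lemma Eproj_eq: "Eproj m Em Ep l i xi x = (if x \<in> X \<and> cell_index l (w0 x) = (i, xi) then 1 else 0)"
  by (simp add: Eproj_def U_X_eq)

definition cell_functions :: "nat \<Rightarrow> (('a, 'b) pt \<Rightarrow> complex) set" where
  "cell_functions l = {f. (\<forall>x. x \<notin> X \<longrightarrow> f x = 0) \<and>
     (\<forall>x\<in>X. \<forall>z\<in>X. cell_index l (w0 x) = cell_index l (w0 z) \<longrightarrow> f x = f z)}"

lemma cell_functionsI:
  assumes "\<And>x. x \<notin> X \<Longrightarrow> f x = 0"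
    and "\<And>x z. x \<in> X \<Longrightarrow> z \<in> X \<Longrightarrow> cell_index l (w0 x) = cell_index l (w0 z) \<Longrightarrow> f x = f z"
  shows "f \<in> cell_functions l"
  unfolding cell_functions_def using assms by blast

lemma cell_functions_eq:
  "f \<in> cell_functions l \<Longrightarrow> x \<in> X \<Longrightarrow> z \<in> X \<Longrightarrow> cell_index l (w0 x) = cell_index l (w0 z) \<Longrightarrow> f x = f z"
  unfolding cell_functions_def by blast

lemma cell_functions_outside: "f \<in> cell_functions l \<Longrightarrow> x \<notin> X \<Longrightarrow> f x = 0"
  unfolding cell_functions_def by blast

lemma agree_cell_index:
  assumes x: "x \<in> X" and z: "z \<in> X" and "agree (Suc (Suc l)) x z"
  shows "cell_index l (w0 x) = cell_index l (w0 z)"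
proof -
  have "fst (z 0) = fst (x 0)" "cell_index (Suc l) (snd (x 0)) = cell_index (Suc l) (snd (z 0))"
    using assms(3) by (auto simp: agree_def coordinate_agree_def cell_index_eq_iff)
  then show ?thesis
    using cell_index_EplusL[OF EplusL_omega0[OF x]] EplusL_omega0[OF z] by simp
qed

lemma cell_functions_CX:
  assumes f: "f \<in> cell_functions l"
  shows "f \<in> CX m Em Ep"
proof (rule locally_constant_in_CX)
  fix x
  show "x \<notin> X \<Longrightarrow> f x = 0" using f by (rule cell_functions_outside)
  assume x: "x \<in> X"
  have "f z = f x" if "z \<in> X" "agree (Suc (Suc l)) x z" for z
    using cell_functions_eq[OF f that(1) x] agree_cell_index[OF x that] by simp
  then show "\<exists>d. \<forall>z\<in>X. agree d x z \<longrightarrow> f z = f x" by blast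
qed

lemma cell_functions_mono:
  assumes "l \<le> l'"
  shows "cell_functions l \<subseteq> cell_functions l'"
proof
  fix f assume f: "f \<in> cell_functions l"
  show "f \<in> cell_functions l'"
  proof (rule cell_functionsI)
    show "x \<notin> X \<Longrightarrow> f x = 0" for x using f by (rule cell_functions_outside)
  next
    fix x z assume x: "x \<in> X" and z: "z \<in> X"
      and "cell_index l' (w0 x) = cell_index l' (w0 z)"
    then have "cell_index l (w0 x) = cell_index l (w0 z)"
      using cell_index_mono[OF omega0_in_Omega omega0_in_Omega _ assms] by blast
    then show "f x = f z" by (rule cell_functions_eq[OF f x z])
  qed
qed

lemma cell_functions_combine:
  assumes f: "f \<in> cell_functions l" and g: "g \<in> cell_functions l" and "h 0 0 = 0"
  shows "(\<lambda>x. h (f x) (g x)) \<in> cell_functions l"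
proof (rule cell_functionsI)
  show "x \<notin> X \<Longrightarrow> h (f x) (g x) = 0" for x
    using assms(3) cell_functions_outside[OF f] cell_functions_outside[OF g] by simp
  show "h (f x) (g x) = h (f z) (g z)"
    if "x \<in> X" "z \<in> X" "cell_index l (w0 x) = cell_index l (w0 z)" for x z
    using cell_functions_eq[OF f that] cell_functions_eq[OF g that] by simp
qed

lemma cell_functions_add: "f \<in> cell_functions l \<Longrightarrow> g \<in> cell_functions l \<Longrightarrow> (\<lambda>x. f x + g x) \<in> cell_functions l"
  and cell_functions_mult: "f \<in> cell_functions l \<Longrightarrow> g \<in> cell_functions l \<Longrightarrow> (\<lambda>x. f x * g x) \<in> cell_functions l"
  and cell_functions_scale: "f \<in> cell_functions l \<Longrightarrow> (\<lambda>x. c * f x) \<in> cell_functions l"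
  and cell_functions_cnj: "f \<in> cell_functions l \<Longrightarrow> (\<lambda>x. cnj (f x)) \<in> cell_functions l"
  using cell_functions_combine[of f l g "(+)"] cell_functions_combine[of f l g "(*)"]
    cell_functions_combine[of f l f "\<lambda>a b. c * a"] cell_functions_combine[of f l f "\<lambda>a b. cnj a"]
  by simp_all

lemma cstar_sub_cell_functions: "cstar_sub m Em Ep (cell_functions l)"
  unfolding cstar_sub_def
proof (intro conjI ballI allI impI subsetI)
  fix f assume "f \<in> cell_functions l"
  then show "f \<in> CX m Em Ep" by (rule cell_functions_CX)
next
  fix f assume f: "f \<in> CX m Em Ep"
    and approx: "\<forall>e>0. \<exists>g\<in>cell_functions l. \<forall>x\<in>X. cmod (f x - g x) < e"
  have "f x = f z" if x: "x \<in> X" and z: "z \<in> X" and cell: "cell_index l (w0 x) = cell_index l (w0 z)" for x z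
  proof (rule ccontr)
    assume "f x \<noteq> f z"
    then have "cmod (f x - f z) / 2 > 0" by simp
    from approx[rule_format, OF this] obtain g
      where g: "g \<in> cell_functions l" "\<forall>y\<in>X. cmod (f y - g y) < cmod (f x - f z) / 2"
      by blast
    have "cmod (f x - g x) < cmod (f x - f z) / 2" using g(2) x by blast
    moreover have "cmod (g x - f z) < cmod (f x - f z) / 2"
      using g cell_functions_eq[OF g(1) x z cell] z by (simp add: norm_minus_commute)
    ultimately have "cmod (f x - f z) < cmod (f x - f z) / 2 + cmod (f x - f z) / 2"
      by (rule norm_diff_triangle_less)
    then show False by simp
  qed
  moreover have "f x = 0" if "x \<notin> X" for x
    using f that by (simp add: CX_def)
  ultimately show "f \<in> cell_functions l"
    by (intro cell_functionsI)
qed (auto intro: cell_functionsI cell_functions_add cell_functions_mult cell_functions_scale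
    cell_functions_cnj)

lemma unitX_in_cell_functions: "unitX m Em Ep \<in> cell_functions l"
  by (rule cell_functionsI) (simp_all add: unitX_def)

lemma Eproj_in_cell_functions: "Eproj m Em Ep l i xi \<in> cell_functions l"
  by (rule cell_functionsI) (simp_all add: Eproj_eq)

lemma shift_preimage_letter:
  assumes "y \<in> X"
  shows "{x \<in> X. shift x = y \<and> fst (x 0) = a} = (if admissible a (w0 y) then {prepend a y} else {})"
proof -
  have preimage: "x = prepend a y \<and> admissible a (w0 y)" if "x \<in> X" "shift x = y" "fst (x 0) = a" for x
    using prepend_shift[OF that(1)] admissible_first_letter[OF that(1)] that(2,3) by simp
  show ?thesis
  proof (cases "admissible a (w0 y)")
    case True
    then have "prepend a y \<in> {x \<in> X. shift x = y \<and> fst (x 0) = a}"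
      using prepend_in_Xplus[OF assms] by simp
    then show ?thesis using preimage True by (simp only: if_True) blast
  next
    case False
    then show ?thesis using preimage by (simp only: if_False) blast
  qed
qed

lemma rho_eq:
  "rho m Em Ep a f y = (if y \<in> X \<and> admissible a (w0 y) then f (prepend a y) else 0)"
  by (simp add: rho_def shift_preimage_letter)

lemma rho_in_cell_functions:
  assumes f: "f \<in> cell_functions l"
  shows "rho m Em Ep a f \<in> cell_functions (Suc l)"
proof (rule cell_functionsI)
  fix y y' assume y: "y \<in> X" and y': "y' \<in> X"
    and cell: "cell_index (Suc l) (w0 y) = cell_index (Suc l) (w0 y')"
  have same: "admissible a (w0 y) \<longleftrightarrow> admissible a (w0 y')"
    by (rule admissible_cell_index[OF omega0_in_Omega[OF y] omega0_in_Omega[OF y'] cell]) simp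
  show "rho m Em Ep a f y = rho m Em Ep a f y'"
  proof (cases "admissible a (w0 y)")
    case True
    then have True': "admissible a (w0 y')" using same by simp
    have "cell_index l (w0 (prepend a y)) = cell_index l (w0 (prepend a y'))"
      by (rule cell_index_EplusL[OF EplusL_omega0_prepend[OF y True]
            EplusL_omega0_prepend[OF y' True'] cell])
    then have "f (prepend a y) = f (prepend a y')"
      by (rule cell_functions_eq[OF f prepend_in_Xplus[OF y True] prepend_in_Xplus[OF y' True']])
    then show ?thesis using True same y y' by (simp add: rho_eq)
  next
    case False
    then show ?thesis using same by (simp add: rho_eq)
  qed
qed (simp add: rho_eq)

lemma cell_function_expansion:
  assumes f: "f \<in> cell_functions l"
  shows "\<exists>c. f = (\<lambda>x. \<Sum>p\<in>cells l. c p * Eproj m Em Ep l (fst p) (snd p) x)"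
proof -
  define c where "c p = f (SOME x. x \<in> X \<and> cell_index l (w0 x) = p)" for p
  have "f x = (\<Sum>p\<in>cells l. c p * Eproj m Em Ep l (fst p) (snd p) x)" for x
  proof (cases "x \<in> X")
    case True
    let ?x' = "SOME x'. x' \<in> X \<and> cell_index l (w0 x') = cell_index l (w0 x)"
    have "?x' \<in> X \<and> cell_index l (w0 ?x') = cell_index l (w0 x)"
      using someI[of "\<lambda>x'. x' \<in> X \<and> cell_index l (w0 x') = cell_index l (w0 x)" x] True by simp
    then have "f ?x' = f x"
      using cell_functions_eq[OF f _ True] by blast
    then have "c (cell_index l (w0 x)) = f x"
      by (simp add: c_def)
    moreover have "cell_index l (w0 x) \<in> cells l"
      using cell_index_in_cells omega0_in_Omega True by blast
    ultimately show ?thesis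
      using True finite_cells by (simp add: Eproj_eq if_distrib[of "(*) _"] sum.delta' cong: if_cong)
  next
    case False
    then show ?thesis using cell_functions_outside[OF f] by (simp add: Eproj_eq)
  qed
  then show ?thesis by blast
qed

lemma cell_functions_subset_A_L: "cell_functions l \<subseteq> A_L m Em Ep"
proof
  fix f assume "f \<in> cell_functions l"
  then obtain c where f: "f = (\<lambda>x. \<Sum>p\<in>cells l. c p * Eproj m Em Ep l (fst p) (snd p) x)"
    using cell_function_expansion by blast
  have "f \<in> B" if "cstar_sub m Em Ep B"
    and gens: "{Eproj m Em Ep l i xi | l i xi. i < m l \<and> xi \<in> Fw m Em l i} \<subseteq> B" for B
    unfolding f using that(1) finite_cells
    by (rule cstar_sub_sum) (fastforce simp: cells_def intro!: subsetD[OF gens])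
  then show "f \<in> A_L m Em Ep"
    unfolding A_L_def by blast
qed

lemma cell_functions_bounded:
  assumes "f \<in> cell_functions l"
  shows "\<exists>K. \<forall>x\<in>X. cmod (f x) \<le> K"
proof -
  obtain c where f: "f = (\<lambda>x. \<Sum>p\<in>cells l. c p * Eproj m Em Ep l (fst p) (snd p) x)"
    using cell_function_expansion[OF assms] by blast
  have "cmod (f x) \<le> (\<Sum>p\<in>cells l. cmod (c p))" for x
  proof -
    have "cmod (f x) \<le> (\<Sum>p\<in>cells l. cmod (c p * Eproj m Em Ep l (fst p) (snd p) x))"
      unfolding f by (rule norm_sum)
    also have "\<dots> \<le> (\<Sum>p\<in>cells l. cmod (c p))"
      by (intro sum_mono) (simp add: Eproj_eq norm_mult)
    finally show ?thesis .
  qed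
  then show ?thesis by blast
qed

lemma cell_functions_Union_add_mult:
  assumes "g \<in> (\<Union>l. cell_functions l)" "h \<in> (\<Union>l. cell_functions l)"
  shows "(\<lambda>x. g x + h x) \<in> (\<Union>l. cell_functions l)" "(\<lambda>x. g x * h x) \<in> (\<Union>l. cell_functions l)"
proof -
  obtain l l' where "g \<in> cell_functions l" "h \<in> cell_functions l'"
    using assms by blast
  then have g: "g \<in> cell_functions (max l l')" and h: "h \<in> cell_functions (max l l')"
    using cell_functions_mono[of l "max l l'"] cell_functions_mono[of l' "max l l'"] by auto
  show "(\<lambda>x. g x + h x) \<in> (\<Union>l. cell_functions l)" "(\<lambda>x. g x * h x) \<in> (\<Union>l. cell_functions l)"
    using cell_functions_add[OF g h] cell_functions_mult[OF g h] by blast+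
qed

lemma cell_functions_Union_scale_cnj:
  assumes "g \<in> (\<Union>l. cell_functions l)"
  shows "(\<lambda>x. c * g x) \<in> (\<Union>l. cell_functions l)" "(\<lambda>x. cnj (g x)) \<in> (\<Union>l. cell_functions l)"
proof -
  obtain l where g: "g \<in> cell_functions l" using assms by blast
  show "(\<lambda>x. c * g x) \<in> (\<Union>l. cell_functions l)" "(\<lambda>x. cnj (g x)) \<in> (\<Union>l. cell_functions l)"
    using cell_functions_scale[OF g] cell_functions_cnj[OF g] by blast+
qed

lemma A_L_approximable:
  assumes "f \<in> A_L m Em Ep"
  shows "uniformly_approximable X (\<Union>l. cell_functions l) f"
proof -
  define B where "B = {f \<in> CX m Em Ep. uniformly_approximable X (\<Union>l. cell_functions l) f}"
  have zero: "(\<lambda>_. 0) \<in> cell_functions 0"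
    by (rule cell_functionsI) simp_all
  have "cstar_sub m Em Ep B"
    unfolding B_def
  proof (rule cstar_sub_uniform_closure)
    fix g h assume "g \<in> (\<Union>l. cell_functions l)" "h \<in> (\<Union>l. cell_functions l)"
    then show "(\<lambda>x. g x + h x) \<in> (\<Union>l. cell_functions l)" "(\<lambda>x. g x * h x) \<in> (\<Union>l. cell_functions l)"
      by (rule cell_functions_Union_add_mult)+
  next
    fix g c assume "g \<in> (\<Union>l. cell_functions l)"
    then show "(\<lambda>x. c * g x) \<in> (\<Union>l. cell_functions l)" "(\<lambda>x. cnj (g x)) \<in> (\<Union>l. cell_functions l)"
      by (rule cell_functions_Union_scale_cnj)+
  next
    fix g assume "g \<in> (\<Union>l. cell_functions l)"
    then obtain l where "g \<in> cell_functions l" by blast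
    then show "\<exists>K. \<forall>x\<in>X. cmod (g x) \<le> K" by (rule cell_functions_bounded)
  qed (use zero in blast)
  moreover have "Eproj m Em Ep l i xi \<in> B" for l i xi
  proof -
    have E: "Eproj m Em Ep l i xi \<in> cell_functions l"
      by (rule Eproj_in_cell_functions)
    then have "uniformly_approximable X (\<Union>l. cell_functions l) (Eproj m Em Ep l i xi)"
      by (intro uniformly_approximable_self) blast
    then show ?thesis
      using cell_functions_CX[OF E] by (simp add: B_def)
  qed
  ultimately have "A_L m Em Ep \<subseteq> B"
    unfolding A_L_def by blast
  then show ?thesis using assms by (simp add: B_def subset_iff)
qed

lemma sigma_condI_cell_points:
  assumes "sigma_condI m Em Ep" "1 \<le> k" "k \<le> l"
  obtains pt where "\<And>c. c \<in> cells l \<Longrightarrow> pt c \<in> X \<and> cell_index l (w0 (pt c)) = c"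
    and "\<And>c c' n. c \<in> cells l \<Longrightarrow> c' \<in> cells l \<Longrightarrow> n \<in> {1..k} \<Longrightarrow> (shift ^^ n) (pt c) \<noteq> pt c'"
proof -
  obtain pts where in_cell: "\<forall>i<m l. \<forall>xi\<in>Fw m Em l i. pts i xi \<in> U_X m Em Ep l i xi"
    and apart: "\<forall>i<m l. \<forall>j<m l. \<forall>xi\<in>Fw m Em l i. \<forall>eta\<in>Fw m Em l j. \<forall>n\<in>{1..k}.
                   (shift ^^ n) (pts i xi) \<noteq> pts j eta"
    using assms unfolding sigma_condI_def by blast
  show thesis
    by (rule that[of "\<lambda>c. pts (fst c) (snd c)"]) (use in_cell apart in \<open>auto simp: cells_def U_X_eq\<close>)
qed

definition cylinder_indicator :: "nat \<Rightarrow> ('a, 'b) pt set \<Rightarrow> ('a, 'b) pt \<Rightarrow> complex" where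
  "cylinder_indicator D P x = (if x \<in> X \<and> (\<exists>p\<in>P. agree D p x) then 1 else 0)"

lemma projD_cylinder_indicator: "projD m Em Ep (cylinder_indicator D P)"
proof -
  have "cylinder_indicator D P \<in> CX m Em Ep"
  proof (rule locally_constant_in_CX)
    show "\<exists>d. \<forall>z\<in>X. agree d x z \<longrightarrow> cylinder_indicator D P z = cylinder_indicator D P x"
      if x: "x \<in> X" for x
    proof (intro exI[of _ D] ballI impI)
      fix z assume z: "z \<in> X" and "agree D x z"
      then have "(\<exists>p\<in>P. agree D p z) \<longleftrightarrow> (\<exists>p\<in>P. agree D p x)"
        using agree_trans agree_sym by blast
      then show "cylinder_indicator D P z = cylinder_indicator D P x"
        using x z by (simp add: cylinder_indicator_def)
    qed
  qed (simp add: cylinder_indicator_def)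
  then show ?thesis
    by (simp add: projD_def cylinder_indicator_def)
qed

lemma separating_projection:
  assumes "sigma_condI m Em Ep" "1 \<le> k" "k \<le> l"
  shows "\<exists>q. projD m Em Ep q \<and>
    (\<forall>f\<in>cell_functions l. f \<noteq> (\<lambda>_. 0) \<longrightarrow> (\<lambda>x. q x * f x) \<noteq> (\<lambda>_. 0)) \<and>
    (\<forall>n\<in>{1..k}. \<forall>x. q x * phi m Em Ep n q x = 0)"
proof -
  obtain pt where pt: "\<And>c. c \<in> cells l \<Longrightarrow> pt c \<in> X \<and> cell_index l (w0 (pt c)) = c"
    and apart: "\<And>c c' n. c \<in> cells l \<Longrightarrow> c' \<in> cells l \<Longrightarrow> n \<in> {1..k} \<Longrightarrow> (shift ^^ n) (pt c) \<noteq> pt c'"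
    using sigma_condI_cell_points[OF assms] by blast
  obtain D where D: "\<And>p p' n x. p \<in> pt ` cells l \<Longrightarrow> p' \<in> pt ` cells l \<Longrightarrow> n \<in> {1..k} \<Longrightarrow>
      agree D p x \<Longrightarrow> \<not> agree D p' ((shift ^^ n) x)"
    using cylinders_separate[of "pt ` cells l" k] finite_cells apart by blast
  define q where "q = cylinder_indicator D (pt ` cells l)"
  have "(\<lambda>x. q x * f x) \<noteq> (\<lambda>_. 0)" if f: "f \<in> cell_functions l" "f \<noteq> (\<lambda>_. 0)" for f
  proof -
    obtain x where "f x \<noteq> 0" using f(2) by auto
    then have x: "x \<in> X" using cell_functions_outside[OF f(1)] by blast
    define c where "c = cell_index l (w0 x)"
    have c: "c \<in> cells l" using cell_index_in_cells omega0_in_Omega x by (simp add: c_def)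
    then have "f (pt c) = f x"
      using pt cell_functions_eq[OF f(1) _ x] by (simp add: c_def)
    moreover have "pt c \<in> X \<and> (\<exists>p\<in>pt ` cells l. agree D p (pt c))"
      using c pt[OF c] agree_refl by blast
    then have "q (pt c) = 1" by (simp add: q_def cylinder_indicator_def)
    ultimately show ?thesis using \<open>f x \<noteq> 0\<close> by (metis mult_1)
  qed
  moreover have "q x * phi m Em Ep n q x = 0" if n: "n \<in> {1..k}" for n x
  proof (cases "\<exists>p\<in>pt ` cells l. agree D p x")
    case True
    then have "\<not> (\<exists>p'\<in>pt ` cells l. agree D p' ((shift ^^ n) x))"
      using D n by blast
    then have "q ((shift ^^ n) x) = 0"
      by (simp add: q_def cylinder_indicator_def)
    then have "phi m Em Ep n q x = 0"
      unfolding phi_def by (auto intro!: sum.neutral)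
    then show ?thesis by simp
  qed (simp add: q_def cylinder_indicator_def)
  ultimately show ?thesis
    using projD_cylinder_indicator unfolding q_def by blast
qed

lemma sigma_condI_imp_triple_condI:
  assumes "sigma_condI m Em Ep"
  shows "triple_condI m Em Ep"
  unfolding triple_condI_def
proof (intro exI[of _ cell_functions] conjI allI impI ballI)
  fix f :: "('a, 'b) pt \<Rightarrow> complex" and e :: real
  assume "f \<in> A_L m Em Ep" "0 < e"
  then obtain l g where "g \<in> cell_functions l" "\<forall>x\<in>X. cmod (f x - g x) < e"
    using A_L_approximable unfolding uniformly_approximable_def by blast
  then show "\<exists>l\<ge>1. \<exists>g\<in>cell_functions l. \<forall>x\<in>X. cmod (f x - g x) < e"
    using cell_functions_mono[of l "Suc l"] by (intro exI[of _ "Suc l"]) auto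
next
  fix k l :: nat assume "1 \<le> k \<and> k \<le> l"
  then show "\<exists>q. projD m Em Ep q \<and> (\<forall>f\<in>cell_functions l. \<forall>x. q x * f x = f x * q x) \<and>
      (\<forall>f\<in>cell_functions l. f \<noteq> (\<lambda>_. 0) \<longrightarrow> (\<lambda>x. q x * f x) \<noteq> (\<lambda>_. 0)) \<and>
      (\<forall>n\<in>{1..k}. \<forall>x. q x * phi m Em Ep n q x = 0)"
    using separating_projection[OF assms] by (simp add: mult.commute)
qed (use cstar_sub_cell_functions cell_functions_subset_A_L unitX_in_cell_functions
    cell_functions_mono rho_in_cell_functions in auto)

subsection \<open>Essential freeness\<close>

lemma backward_extension:
  assumes "x \<in> X" "y \<in> X" "cell_index (j + d) (w0 y) = cell_index (j + d) (w0 ((shift ^^ j) x))"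
  shows "\<exists>z\<in>X. (shift ^^ j) z = y \<and>
    (\<forall>i\<le>j. cell_index (i + d) (w0 ((shift ^^ i) z)) = cell_index (i + d) (w0 ((shift ^^ i) x))) \<and>
    (\<forall>i<j. fst (z i) = fst (x i))"
  using assms
proof (induction j arbitrary: x d)
  case 0
  then show ?case by auto
next
  case (Suc j)
  have "cell_index (j + Suc d) (w0 y) = cell_index (j + Suc d) (w0 ((shift ^^ j) (shift x)))"
    using Suc.prems(3) by (simp add: funpow_swap1)
  then obtain z' where z': "z' \<in> X" "(shift ^^ j) z' = y"
    and cells: "\<forall>i\<le>j. cell_index (i + Suc d) (w0 ((shift ^^ i) z')) =
                      cell_index (i + Suc d) (w0 ((shift ^^ i) (shift x)))"
    and letters: "\<forall>i<j. fst (z' i) = fst (shift x i)"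
    using Suc.IH[OF shift_in_Xplus[OF Suc.prems(1)] Suc.prems(2)] by blast
  define z where "z = prepend (fst (x 0)) z'"
  have "cell_index (Suc d) (w0 z') = cell_index (Suc d) (w0 (shift x))"
    using cells[rule_format, of 0] by simp
  then have z: "z \<in> X" "cell_index d (w0 z) = cell_index d (w0 x)"
    using prepend_same_cell[OF Suc.prems(1) z'(1)] by (simp_all add: z_def)
  have shift_z: "(shift ^^ Suc i) z = (shift ^^ i) z'" for i
    by (simp add: z_def funpow_swap1)
  show ?case
  proof (intro bexI[OF _ z(1)] conjI allI impI)
    show "(shift ^^ Suc j) z = y" using shift_z z'(2) by simp
  next
    fix i assume "i \<le> Suc j"
    then show "cell_index (i + d) (w0 ((shift ^^ i) z)) = cell_index (i + d) (w0 ((shift ^^ i) x))"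
      using z(2) cells shift_z by (cases i) (auto simp: funpow_swap1)
  next
    fix i assume "i < Suc j"
    then show "fst (z i) = fst (x i)"
      using letters by (cases i) (auto simp: z_def prepend_def shift_def)
  qed
qed

lemma agreeing_point_with_prescribed_shift:
  assumes x: "x \<in> X" and y: "y \<in> X" and "d \<le> N"
    and cell: "cell_index (N + d) (w0 y) = cell_index (N + d) (w0 ((shift ^^ N) x))"
  shows "\<exists>z\<in>X. (shift ^^ N) z = y \<and> agree d x z"
proof -
  obtain z where z: "z \<in> X" "(shift ^^ N) z = y"
    and cells: "\<forall>i\<le>N. cell_index (i + d) (w0 ((shift ^^ i) z)) = cell_index (i + d) (w0 ((shift ^^ i) x))"
    and letters: "\<forall>i<N. fst (z i) = fst (x i)"
    using backward_extension[OF x y cell] by blast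
  have "fst (snd (z i)) n = fst (snd (x i)) n \<and> snd (snd (z i)) n = snd (snd (x i)) n"
    if "i < d" "n < d" for i n
  proof -
    have "cell_index (Suc i + d) (w0 ((shift ^^ Suc i) z)) = cell_index (Suc i + d) (w0 ((shift ^^ Suc i) x))"
      using cells[rule_format, of "Suc i"] that \<open>d \<le> N\<close> by (simp del: funpow.simps)
    then have cell: "cell_index (Suc i + d) (snd (z i)) = cell_index (Suc i + d) (snd (x i))"
      by (simp only: omega0_funpow_shift[OF z(1)] omega0_funpow_shift[OF x])
    have "snd (z i) \<in> Omega m Em" "snd (x i) \<in> Omega m Em"
      using z(1) x by (simp_all add: Xplus_iff)
    then show ?thesis
      using cell that(2) by (intro cell_index_eq_below[where l = "Suc i + d"]) auto
  qed
  moreover have "fst (z i) = fst (x i)" if "i < d" for i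
    using letters that \<open>d \<le> N\<close> by simp
  ultimately have "agree d x z"
    by (simp add: agree_def coordinate_agree_def)
  then show ?thesis using z by blast
qed

lemma shifts_differ_on_every_cylinder:
  assumes sc: "sigma_condI m Em Ep" and x: "x \<in> X" and "p < q"
    and coincide: "\<And>z. z \<in> X \<Longrightarrow> agree d x z \<Longrightarrow> (shift ^^ p) z = (shift ^^ q) z"
  shows False
proof -
  \<comment> \<open>with \<open>N = d + p\<close>, \<open>\<sigma>\<^sup>N z\<close> is a shift of \<open>\<sigma>\<^sup>p z = \<sigma>\<^sup>q z\<close>\<close>
  define k where "k = q - p"
  define N where "N = d + p"
  define l where "l = N + d + k"
  have k: "1 \<le> k" "k \<le> l" using \<open>p < q\<close> by (simp_all add: k_def l_def)
  obtain pt where pt: "\<And>c. c \<in> cells l \<Longrightarrow> pt c \<in> X \<and> cell_index l (w0 (pt c)) = c"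
    and apart: "\<And>c c' n. c \<in> cells l \<Longrightarrow> c' \<in> cells l \<Longrightarrow> n \<in> {1..k} \<Longrightarrow> (shift ^^ n) (pt c) \<noteq> pt c'"
    using sigma_condI_cell_points[OF sc k] by blast
  define c where "c = cell_index l (w0 ((shift ^^ N) x))"
  have xN: "(shift ^^ N) x \<in> X" using funpow_shift_in_Xplus[OF x] .
  have c: "c \<in> cells l" using cell_index_in_cells omega0_in_Omega[OF xN] by (simp add: c_def)
  have "cell_index (N + d) (w0 (pt c)) = cell_index (N + d) (w0 ((shift ^^ N) x))"
    using cell_index_mono[OF omega0_in_Omega omega0_in_Omega, of "pt c" "(shift ^^ N) x" l] pt[OF c] xN
    by (simp add: c_def l_def)
  moreover have "d \<le> N" by (simp add: N_def)
  ultimately obtain z where z: "z \<in> X" "(shift ^^ N) z = pt c" "agree d x z"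
    using agreeing_point_with_prescribed_shift[OF x conjunct1[OF pt[OF c]]] by blast
  have "(shift ^^ N) z = (shift ^^ d) ((shift ^^ p) z)"
    by (simp add: N_def funpow_add)
  also have "\<dots> = (shift ^^ d) ((shift ^^ q) z)"
    using coincide[OF z(1,3)] by simp
  also have "\<dots> = (shift ^^ (k + N)) z"
  proof -
    have "d + q = k + N" using \<open>p < q\<close> by (simp add: k_def N_def)
    then show ?thesis by (metis comp_apply funpow_add)
  qed
  also have "\<dots> = (shift ^^ k) ((shift ^^ N) z)"
    by (simp add: funpow_add)
  finally have "(shift ^^ k) (pt c) = pt c" using z(2) by simp
  then show False using apart[OF c c] k(1) by simp
qed

lemma sigma_condI_imp_essentially_free:
  assumes "sigma_condI m Em Ep"
  shows "essentially_free m Em Ep"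
  unfolding essentially_free_def
proof (intro allI impI)
  fix p q :: nat
  assume "p \<noteq> q"
  show "Xtop m Em Ep interior_of {x \<in> X. (shift ^^ p) x = (shift ^^ q) x} = {}"
  proof (rule ccontr)
    assume "Xtop m Em Ep interior_of {x \<in> X. (shift ^^ p) x = (shift ^^ q) x} \<noteq> {}"
    then obtain x T where T: "openin (Xtop m Em Ep) T" "x \<in> T"
      "T \<subseteq> {x \<in> X. (shift ^^ p) x = (shift ^^ q) x}"
      unfolding interior_of_def by blast
    then obtain S where S: "openin point_topology S" "T = S \<inter> X"
      unfolding Xtop_eq_subtopology openin_subtopology by blast
    then obtain d where d: "\<And>z. agree d x z \<Longrightarrow> z \<in> S"
      using open_contains_cylinder T(2) by blast
    have x: "x \<in> X" using T(2) S(2) by blast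
    have coincide: "(shift ^^ p) z = (shift ^^ q) z" if "z \<in> X" "agree d x z" for z
      using d T(3) S(2) that by blast
    show False
    proof (cases "p < q")
      case True
      then show False by (rule shifts_differ_on_every_cylinder[OF assms x _ coincide])
    next
      case False
      then have "q < p" using \<open>p \<noteq> q\<close> by simp
      then show False using shifts_differ_on_every_cylinder[OF assms x] coincide by metis
    qed
  qed
qed

end

theorem proposition8p6:
  fixes m :: "nat \<Rightarrow> nat"
    and Em :: "nat \<Rightarrow> nat \<Rightarrow> 'a::finite \<Rightarrow> nat \<Rightarrow> bool"
    and Ep :: "nat \<Rightarrow> nat \<Rightarrow> 'b::finite \<Rightarrow> nat \<Rightarrow> bool"
  assumes "lambda_bisystem m Em Ep"
    and "sigma_condI m Em Ep"
  shows "essentially_free m Em Ep \<and> triple_condI m Em Ep"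
proof -
  interpret lambda_graph_bisystem m Em Ep
    by (rule lambda_graph_bisystem.intro) (rule assms(1))
  show ?thesis
    using sigma_condI_imp_essentially_free sigma_condI_imp_triple_condI assms(2) by blast
qed

end
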